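(* Let $L\in\mathcal{M}(\mathbb{R}^d)$ and $a\in\mathbb{R}_*^d$. Then $L\circ D_a=D_a\circ L$.
   Context: $\mathbb{R}_*=\mathbb{R}\setminus\{0\}$; $\sigma(a)=\prod_j a_j/|a_j|$ for $a\in\mathbb{R}_*^d$; $x/a$ is the coordinatewise quotient. $\mathcal{M}(\mathbb{R}^d)$ is the set of continuous linear operators $L$ on $\mathcal{D}'(\mathbb{R}^d)$ such that every monomial $x^\alpha$, $\alpha\in\mathbb{N}_0^d$, is an eigenvector of $L$. For $a\in\mathbb{R}_*^d$ the dilation operator $D_a$ on $\mathcal{D}'(\mathbb{R}^d)$ is $(D_aT)\varphi=T_x\Big(\frac{\sigma(a)}{a_1\cdots a_d}\varphi\big(\tfrac{x}{a}\big)\Big)$ for $\varphi\in\mathcal{D}(\mathbb{R}^d)$; one has $D_a\xi^\alpha=a^\alpha\xi^\alpha$. *)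

theory Defs
  imports "HOL-Analysis.Analysis"
begin

text \<open>Points of R^d are elements of real^'n, d = CARD('n). Distributions are complex-valued.\<close>

type_synonym 'n testfun = "real^'n \<Rightarrow> complex"
type_synonym 'n distr = "'n testfun \<Rightarrow> complex"

definition partial_deriv :: "'n::finite \<Rightarrow> 'n testfun \<Rightarrow> 'n testfun" where
  "partial_deriv i f = (\<lambda>x. frechet_derivative f (at x) (axis i 1))"

fun iter_partial :: "'n::finite list \<Rightarrow> 'n testfun \<Rightarrow> 'n testfun" where
  "iter_partial [] f = f"
| "iter_partial (i # is) f = partial_deriv i (iter_partial is f)"

definition smooth_fun :: "('n::finite) testfun \<Rightarrow> bool" where
  "smooth_fun f \<longleftrightarrow> (\<forall>is x. iter_partial is f differentiable (at x))"

definition test_fun :: "('n::finite) testfun \<Rightarrow> bool" where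
  "test_fun \<phi> \<longleftrightarrow> smooth_fun \<phi> \<and> bounded {x. \<phi> x \<noteq> 0}"

definition D_conv :: "(nat \<Rightarrow> ('n::finite) testfun) \<Rightarrow> 'n testfun \<Rightarrow> bool" where
  "D_conv \<phi>s \<phi> \<longleftrightarrow> (\<forall>k. test_fun (\<phi>s k)) \<and> test_fun \<phi> \<and>
     (\<exists>K. compact K \<and> (\<forall>k. {x. \<phi>s k x \<noteq> 0} \<subseteq> K)) \<and>
     (\<forall>is. uniform_limit UNIV (\<lambda>k. iter_partial is (\<phi>s k)) (iter_partial is \<phi>) sequentially)"

text \<open>Distributions: continuous linear functionals on D(R^d), extended by 0 off D(R^d).\<close>
definition distribution :: "('n::finite) distr \<Rightarrow> bool" where
  "distribution T \<longleftrightarrow>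
     (\<forall>\<phi>. \<not> test_fun \<phi> \<longrightarrow> T \<phi> = 0) \<and>
     (\<forall>\<phi> \<psi>. test_fun \<phi> \<longrightarrow> test_fun \<psi> \<longrightarrow> T (\<lambda>x. \<phi> x + \<psi> x) = T \<phi> + T \<psi>) \<and>
     (\<forall>\<phi> c. test_fun \<phi> \<longrightarrow> T (\<lambda>x. c * \<phi> x) = c * T \<phi>) \<and>
     (\<forall>\<phi>s \<phi>. D_conv \<phi>s \<phi> \<longrightarrow> (\<lambda>k. T (\<phi>s k)) \<longlonglongrightarrow> T \<phi>)"

definition distributions :: "('n::finite) distr set" where
  "distributions = {T. distribution T}"

text \<open>Weak-* topology on D'(R^d) (pointwise convergence).\<close>
definition distr_topology :: "('n::finite) distr topology" where
  "distr_topology = subtopology (product_topology (\<lambda>_. euclidean) UNIV) distributions"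

definition monomial_distr :: "('n::finite \<Rightarrow> nat) \<Rightarrow> 'n distr" where
  "monomial_distr \<alpha> = (\<lambda>\<phi>. if test_fun \<phi>
      then (LINT x|lborel. complex_of_real (\<Prod>i\<in>UNIV. (x$i) ^ \<alpha> i) * \<phi> x) else 0)"

definition cont_lin_op :: "(('n::finite) distr \<Rightarrow> 'n distr) \<Rightarrow> bool" where
  "cont_lin_op L \<longleftrightarrow> (\<forall>T\<in>distributions. L T \<in> distributions) \<and>
     (\<forall>T\<in>distributions. \<forall>S\<in>distributions. L (\<lambda>\<phi>. T \<phi> + S \<phi>) = (\<lambda>\<phi>. L T \<phi> + L S \<phi>)) \<and>
     (\<forall>T\<in>distributions. \<forall>c. L (\<lambda>\<phi>. c * T \<phi>) = (\<lambda>\<phi>. c * L T \<phi>)) \<and>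
     continuous_map distr_topology distr_topology L"

definition M_class :: "(('n::finite) distr \<Rightarrow> 'n distr) set" where
  "M_class = {L. cont_lin_op L \<and>
     (\<forall>\<alpha>. \<exists>c. L (monomial_distr \<alpha>) = (\<lambda>\<phi>. c * monomial_distr \<alpha> \<phi>))}"

definition sigma_sign :: "real^'n::finite \<Rightarrow> real" where
  "sigma_sign a = (\<Prod>i\<in>UNIV. a$i / \<bar>a$i\<bar>)"

definition dilation :: "real^'n::finite \<Rightarrow> 'n distr \<Rightarrow> 'n distr" where
  "dilation a T = (\<lambda>\<phi>. T (\<lambda>x. complex_of_real (sigma_sign a / (\<Prod>i\<in>UNIV. a$i))
                              * \<phi> (\<chi> i. x$i / a$i)))"

end

theory Submission
  imports Defs
begin

text \<open>
  On the polynomial distributions, i.e. finite linear combinations of the monomials x^\<alpha>,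
  both L and D_a act diagonally (L x^\<alpha> = c_\<alpha> x^\<alpha> and D_a x^\<alpha> = a^\<alpha> x^\<alpha>), so L \<circ> D_a
  and D_a \<circ> L agree there.
  Both composites are weak-* continuous and the weak-* topology is Hausdorff, so it suffices that the
  polynomial distributions are weak-* dense. A basic neighbourhood of T constrains T on finitely many
  test functions, and by finite-dimensional duality some polynomial distribution matches T on them,
  because the monomials separate test functions: if all moments of \<phi> vanish, then approximating
  cnj \<phi> uniformly on the support of \<phi> by polynomials (Stone-Weierstrass) shows that the
  integral of |\<phi>|^2 vanishes.
\<close>

section \<open>Scaling of test functions\<close>

definition vec_mul :: "real^'n::finite \<Rightarrow> real^'n \<Rightarrow> real^'n" where
  "vec_mul b x = (\<chi> i. b$i * x$i)"

lemma linear_vec_mul: "linear (vec_mul b)"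
  by (auto intro!: linearI simp: vec_mul_def vec_eq_iff algebra_simps)

lemma bounded_linear_vec_mul: "bounded_linear (vec_mul b)"
  using linear_vec_mul linear_conv_bounded_linear by blast

lemma vec_mul_axis: "vec_mul b (axis i 1) = b$i *\<^sub>R axis i 1"
  by (simp add: vec_mul_def vec_eq_iff axis_def)

lemma vec_mul_inverse:
  "\<forall>i. b$i \<noteq> 0 \<Longrightarrow> vec_mul b (vec_mul (\<chi> i. 1 / b$i) x) = x"
  "\<forall>i. b$i \<noteq> 0 \<Longrightarrow> vec_mul (\<chi> i. 1 / b$i) (vec_mul b x) = x"
  by (simp_all add: vec_mul_def vec_eq_iff)

lemma partial_deriv_add:
  assumes "\<And>x. f differentiable (at x)" "\<And>x. g differentiable (at x)"
  shows "partial_deriv i (\<lambda>x. f x + g x) = (\<lambda>x. partial_deriv i f x + partial_deriv i g x)"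
proof
  fix x
  have "((\<lambda>x. f x + g x) has_derivative
      (\<lambda>h. frechet_derivative f (at x) h + frechet_derivative g (at x) h)) (at x)"
    using assms by (intro has_derivative_add) (auto simp: frechet_derivative_works)
  then show "partial_deriv i (\<lambda>x. f x + g x) x = partial_deriv i f x + partial_deriv i g x"
    unfolding partial_deriv_def by (simp flip: frechet_derivative_at)
qed

lemma partial_deriv_cmult:
  assumes "\<And>x. f differentiable (at x)"
  shows "partial_deriv i (\<lambda>x. c * f x) = (\<lambda>x. c * partial_deriv i f x)"
proof
  fix x
  have "((\<lambda>x. c * f x) has_derivative (\<lambda>h. c * frechet_derivative f (at x) h)) (at x)"
    using assms by (intro has_derivative_mult_right) (auto simp: frechet_derivative_works)
  then show "partial_deriv i (\<lambda>x. c * f x) x = c * partial_deriv i f x"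
    unfolding partial_deriv_def by (simp flip: frechet_derivative_at)
qed

lemma has_derivative_scaled:
  fixes F :: "'n::finite testfun"
  assumes "(F has_derivative F') (at (vec_mul b x))"
  shows "((\<lambda>x. c * F (vec_mul b x)) has_derivative (\<lambda>h. c * F' (vec_mul b h))) (at x)"
  using has_derivative_mult_right[OF
      diff_chain_at[OF bounded_linear_imp_has_derivative[OF bounded_linear_vec_mul] assms]]
  by (simp add: o_def)

lemma differentiable_scaled:
  fixes F :: "'n::finite testfun"
  assumes "F differentiable (at (vec_mul b x))"
  shows "(\<lambda>x. c * F (vec_mul b x)) differentiable (at x)"
  using has_derivative_scaled assms unfolding differentiable_def by blast

lemma partial_deriv_scaled:
  fixes F :: "'n::finite testfun"
  assumes "\<And>y. F differentiable (at y)"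
  shows "partial_deriv i (\<lambda>x. c * F (vec_mul b x))
       = (\<lambda>x. (c * of_real (b$i)) * partial_deriv i F (vec_mul b x))"
proof
  fix x
  let ?F' = "frechet_derivative F (at (vec_mul b x))"
  have F': "(F has_derivative ?F') (at (vec_mul b x))"
    using assms frechet_derivative_works by blast
  have "partial_deriv i (\<lambda>x. c * F (vec_mul b x)) x = c * ?F' (vec_mul b (axis i 1))"
    unfolding partial_deriv_def by (simp flip: frechet_derivative_at[OF has_derivative_scaled[OF F']])
  also have "\<dots> = c * (b$i *\<^sub>R ?F' (axis i 1))"
    using has_derivative_linear[OF F'] by (simp add: vec_mul_axis linear_scale)
  finally show "partial_deriv i (\<lambda>x. c * F (vec_mul b x)) x
      = (c * of_real (b$i)) * partial_deriv i F (vec_mul b x)"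
    by (simp add: partial_deriv_def scaleR_conv_of_real)
qed

lemma iter_partial_scaled:
  assumes "smooth_fun \<phi>"
  shows "iter_partial is (\<lambda>x. c * \<phi> (vec_mul b x))
       = (\<lambda>x. (c * (\<Prod>i\<leftarrow>is. of_real (b$i))) * iter_partial is \<phi> (vec_mul b x))"
proof (induction "is" arbitrary: c)
  case Nil then show ?case by simp
next
  case (Cons i "is")
  have "iter_partial (i # is) (\<lambda>x. c * \<phi> (vec_mul b x))
      = partial_deriv i (\<lambda>x. (c * (\<Prod>i\<leftarrow>is. of_real (b$i))) * iter_partial is \<phi> (vec_mul b x))"
    using Cons by simp
  also have "\<dots> = (\<lambda>x. (c * (\<Prod>i\<leftarrow>is. of_real (b$i)) * of_real (b$i))
                        * iter_partial (i # is) \<phi> (vec_mul b x))"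
    using assms by (subst partial_deriv_scaled) (auto simp: smooth_fun_def)
  finally show ?case by (simp add: mult_ac)
qed

lemma iter_partial_add:
  assumes "smooth_fun f" "smooth_fun g"
  shows "iter_partial is (\<lambda>x. f x + g x) = (\<lambda>x. iter_partial is f x + iter_partial is g x)"
  using assms unfolding smooth_fun_def by (induction "is") (simp_all add: partial_deriv_add)

lemma iter_partial_cmult:
  assumes "smooth_fun f"
  shows "iter_partial is (\<lambda>x. c * f x) = (\<lambda>x. c * iter_partial is f x)"
  using assms unfolding smooth_fun_def by (induction "is") (simp_all add: partial_deriv_cmult)

lemma iter_partial_zero: "iter_partial is (\<lambda>x. 0) = (\<lambda>x. 0)"
  by (induction "is") (simp_all add: partial_deriv_def)

lemma smooth_fun_add: "smooth_fun f \<Longrightarrow> smooth_fun g \<Longrightarrow> smooth_fun (\<lambda>x. f x + g x)"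
  by (simp add: smooth_fun_def iter_partial_add differentiable_add)

lemma smooth_fun_cmult: "smooth_fun f \<Longrightarrow> smooth_fun (\<lambda>x. c * f x)"
  by (simp add: iter_partial_cmult smooth_fun_def)

lemma smooth_fun_scaled:
  assumes "smooth_fun \<phi>" shows "smooth_fun (\<lambda>x. c * \<phi> (vec_mul b x))"
  unfolding smooth_fun_def iter_partial_scaled[OF assms]
proof (intro allI differentiable_scaled)
  show "iter_partial is \<phi> differentiable (at (vec_mul b x))" for "is" x
    using assms by (simp add: smooth_fun_def)
qed

lemma test_fun_zero: "test_fun (\<lambda>x. 0)"
  by (simp add: test_fun_def smooth_fun_def iter_partial_zero)

lemma test_fun_add: "test_fun f \<Longrightarrow> test_fun g \<Longrightarrow> test_fun (\<lambda>x. f x + g x)"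
  unfolding test_fun_def
  by (auto simp: smooth_fun_add intro: bounded_subset[of "{x. f x \<noteq> 0} \<union> {x. g x \<noteq> 0}"])

lemma test_fun_cmult: "test_fun f \<Longrightarrow> test_fun (\<lambda>x. c * f x)"
  unfolding test_fun_def
  by (auto simp: smooth_fun_cmult intro: bounded_subset[of "{x. f x \<noteq> 0}"])

lemma support_scaled_subset:
  fixes \<phi> :: "'n::finite testfun"
  assumes "\<forall>i. b$i \<noteq> 0"
  shows "{x. c * \<phi> (vec_mul b x) \<noteq> 0} \<subseteq> vec_mul (\<chi> i. 1 / b$i) ` {y. \<phi> y \<noteq> 0}"
proof
  fix x assume "x \<in> {x. c * \<phi> (vec_mul b x) \<noteq> 0}"
  then have "vec_mul b x \<in> {y. \<phi> y \<noteq> 0}" by simp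
  moreover have "x = vec_mul (\<chi> i. 1 / b$i) (vec_mul b x)"
    using assms by (simp add: vec_mul_inverse)
  ultimately show "x \<in> vec_mul (\<chi> i. 1 / b$i) ` {y. \<phi> y \<noteq> 0}"
    by (rule rev_image_eqI)
qed

lemma test_fun_scaled:
  assumes "test_fun \<phi>" "\<forall>i. b$i \<noteq> 0"
  shows "test_fun (\<lambda>x. c * \<phi> (vec_mul b x))"
proof -
  have "bounded (vec_mul (\<chi> i. 1 / b$i) ` {y. \<phi> y \<noteq> 0})"
    using assms(1) unfolding test_fun_def by (intro bounded_linear_image bounded_linear_vec_mul) auto
  then have "bounded {x. c * \<phi> (vec_mul b x) \<noteq> 0}"
    by (rule bounded_subset[OF _ support_scaled_subset[OF assms(2)]])
  then show ?thesis using assms(1) smooth_fun_scaled unfolding test_fun_def by blast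
qed

lemma test_fun_scaled_iff:
  assumes "c \<noteq> 0" "\<forall>i. b$i \<noteq> 0"
  shows "test_fun (\<lambda>x. c * \<phi> (vec_mul b x)) \<longleftrightarrow> test_fun \<phi>"
proof
  assume scaled: "test_fun (\<lambda>x. c * \<phi> (vec_mul b x))"
  have inverse_nonzero: "\<forall>i. (\<chi> i. 1 / b$i)$i \<noteq> 0" using assms(2) by simp
  have "test_fun (\<lambda>y. (1 / c) * (c * \<phi> (vec_mul b (vec_mul (\<chi> i. 1 / b$i) y))))"
    by (rule test_fun_scaled[OF scaled inverse_nonzero])
  moreover have "(\<lambda>y. (1 / c) * (c * \<phi> (vec_mul b (vec_mul (\<chi> i. 1 / b$i) y)))) = \<phi>"
    using assms by (simp add: vec_mul_inverse fun_eq_iff)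
  ultimately show "test_fun \<phi>" by (simp only:)
qed (use assms test_fun_scaled in blast)

lemma continuous_on_test_fun: "test_fun f \<Longrightarrow> continuous_on UNIV f"
  unfolding test_fun_def smooth_fun_def
  by (metis iter_partial.simps(1) continuous_at_imp_continuous_on differentiable_imp_continuous_within)

lemma D_conv_scaled:
  assumes D: "D_conv \<phi>s \<phi>" and b: "\<forall>i. b$i \<noteq> 0"
  shows "D_conv (\<lambda>k x. c * \<phi>s k (vec_mul b x)) (\<lambda>x. c * \<phi> (vec_mul b x))"
proof -
  from D have test: "\<And>k. test_fun (\<phi>s k)" "test_fun \<phi>" and
    lim: "\<And>is. uniform_limit UNIV (\<lambda>k. iter_partial is (\<phi>s k)) (iter_partial is \<phi>) sequentially"
    unfolding D_conv_def by auto
  from D obtain K where K: "compact K" "\<And>k. {x. \<phi>s k x \<noteq> 0} \<subseteq> K"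
    unfolding D_conv_def by auto
  let ?K = "vec_mul (\<chi> i. 1 / b$i) ` K"
  have "compact ?K"
    by (rule compact_continuous_image[OF linear_continuous_on[OF bounded_linear_vec_mul] K(1)])
  moreover have "{x. c * \<phi>s k (vec_mul b x) \<noteq> 0} \<subseteq> ?K" for k
    using support_scaled_subset[OF b] K(2) by blast
  moreover have "uniform_limit UNIV (\<lambda>k. iter_partial is (\<lambda>x. c * \<phi>s k (vec_mul b x)))
      (iter_partial is (\<lambda>x. c * \<phi> (vec_mul b x))) sequentially" for "is"
    using test bounded_linear.uniform_limit[OF bounded_linear_mult_right
        uniform_limit_compose'[OF lim, where h = "vec_mul b" and B = UNIV]]
    unfolding test_fun_def by (simp add: iter_partial_scaled)
  ultimately show ?thesis unfolding D_conv_def using test test_fun_scaled[OF _ b] by blast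
qed

section \<open>Monomial distributions and dilations\<close>

lemma integrable_continuous_compact_support:
  fixes f :: "'a::euclidean_space \<Rightarrow> 'b::{banach, second_countable_topology}"
  assumes "continuous_on UNIV f" "compact K" "\<And>x. x \<notin> K \<Longrightarrow> f x = 0"
  shows "integrable lborel f"
proof -
  have "integrable lborel (\<lambda>x. indicator K x *\<^sub>R f x)"
    using assms(1,2) by (intro borel_integrable_compact) (auto intro: continuous_on_subset)
  moreover have "(\<lambda>x. indicator K x *\<^sub>R f x) = f"
    using assms(3) by (auto simp: fun_eq_iff indicator_def)
  ultimately show ?thesis by simp
qed

lemma norm_integral_mult_le:
  fixes g h :: "'a \<Rightarrow> complex"
  assumes "integrable M (\<lambda>x. g x * h x)" "integrable M h"
    and "\<And>x. h x \<noteq> 0 \<Longrightarrow> norm (g x) \<le> e"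
  shows "norm (LINT x|M. g x * h x) \<le> e * (LINT x|M. norm (h x))"
proof -
  have "e \<ge> 0 \<or> (\<forall>x. h x = 0)" using assms(3) norm_ge_zero order_trans by blast
  then have "norm (g x * h x) \<le> e * norm (h x)" for x
    using assms(3)[of x] by (cases "h x = 0") (auto simp: norm_mult intro: mult_right_mono)
  then have "(LINT x|M. norm (g x * h x)) \<le> (LINT x|M. e * norm (h x))"
    using assms(1,2) by (intro integral_mono integrable_norm) auto
  then show ?thesis by (intro order_trans[OF integral_norm_bound]) simp
qed

lemma compact_closure_support: "test_fun \<phi> \<Longrightarrow> compact (closure {x. \<phi> x \<noteq> 0})"
  unfolding test_fun_def by (simp add: compact_closure)

lemma integrable_mult_test_fun:
  fixes p :: "'n::finite testfun"
  assumes "continuous_on UNIV p" "test_fun \<phi>"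
  shows "integrable lborel (\<lambda>x. p x * \<phi> x)"
  using assms closure_subset[of "{x. \<phi> x \<noteq> 0}"]
  by (intro integrable_continuous_compact_support[OF _ compact_closure_support[OF assms(2)]]
      continuous_on_mult assms(1) continuous_on_test_fun[OF assms(2)]) auto

lemma tendsto_integral_mult_uniform_limit:
  fixes p :: "'a::euclidean_space \<Rightarrow> complex"
  assumes lim: "uniform_limit UNIV \<phi>s \<phi> sequentially"
    and cont: "continuous_on UNIV p" "\<And>k. continuous_on UNIV (\<phi>s k)" "continuous_on UNIV \<phi>"
    and K: "compact K" "\<And>k x. x \<notin> K \<Longrightarrow> \<phi>s k x = 0" "\<And>x. x \<notin> K \<Longrightarrow> \<phi> x = 0"
  shows "(\<lambda>k. LINT x|lborel. p x * \<phi>s k x) \<longlonglongrightarrow> (LINT x|lborel. p x * \<phi> x)"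
proof -
  define pK where "pK x = indicator K x *\<^sub>R p x" for x
  define C where "C = (LINT x|lborel. norm (pK x))"
  have int_pK: "integrable lborel pK"
    unfolding pK_def by (rule borel_integrable_compact[OF K(1) continuous_on_subset[OF cont(1)]]) simp
  have cut_off: "(\<lambda>x. p x * \<phi>s k x) = (\<lambda>x. \<phi>s k x * pK x)" "(\<lambda>x. p x * \<phi> x) = (\<lambda>x. \<phi> x * pK x)" for k
    using K by (auto simp: fun_eq_iff pK_def indicator_def)
  have int_mult: "integrable lborel (\<lambda>x. f x * pK x)" if "continuous_on UNIV f" for f
  proof -
    have "integrable lborel (\<lambda>x. indicator K x *\<^sub>R (f x * p x))"
      using that cont(1) by (intro borel_integrable_compact[OF K(1)] continuous_on_subset[OF continuous_on_mult]) auto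
    then show ?thesis by (simp add: pK_def)
  qed
  show ?thesis
    unfolding cut_off
  proof (rule metric_LIMSEQ_I)
    fix r :: real assume "r > 0"
    have "C \<ge> 0" unfolding C_def by simp
    with \<open>r > 0\<close> have "r / (C + 1) > 0" and less_r: "r / (C + 1) * C < r"
      by (auto simp: field_simps)
    then obtain N where N: "\<And>n x. n \<ge> N \<Longrightarrow> dist (\<phi>s n x) (\<phi> x) < r / (C + 1)"
      using lim unfolding uniform_limit_iff eventually_sequentially by blast
    have "dist (LINT x|lborel. \<phi>s n x * pK x) (LINT x|lborel. \<phi> x * pK x) < r" if "n \<ge> N" for n
    proof -
      have "dist (LINT x|lborel. \<phi>s n x * pK x) (LINT x|lborel. \<phi> x * pK x)
          = norm (LINT x|lborel. (\<phi>s n x - \<phi> x) * pK x)"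
        using int_mult[OF cont(2)] int_mult[OF cont(3)] by (simp add: dist_norm left_diff_distrib)
      also have "\<dots> \<le> r / (C + 1) * (LINT x|lborel. norm (pK x))"
        using N[OF that] int_pK
        by (intro norm_integral_mult_le int_mult continuous_on_diff cont)
          (auto simp: dist_norm less_imp_le)
      finally have "dist (LINT x|lborel. \<phi>s n x * pK x) (LINT x|lborel. \<phi> x * pK x) \<le> r / (C + 1) * C"
        by (simp add: C_def)
      with less_r show ?thesis by linarith
    qed
    then show "\<exists>N. \<forall>n\<ge>N. dist (LINT x|lborel. \<phi>s n x * pK x) (LINT x|lborel. \<phi> x * pK x) < r"
      by blast
  qed
qed

definition real_monomial :: "('n::finite \<Rightarrow> nat) \<Rightarrow> real^'n \<Rightarrow> real" where
  "real_monomial \<alpha> x = (\<Prod>i\<in>UNIV. (x$i) ^ \<alpha> i)"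

lemma monomial_distr_eq:
  "monomial_distr \<alpha> \<phi> =
     (if test_fun \<phi> then LINT x|lborel. of_real (real_monomial \<alpha> x) * \<phi> x else 0)"
  by (simp add: monomial_distr_def real_monomial_def)

lemma continuous_on_real_monomial:
  "continuous_on UNIV (\<lambda>x. complex_of_real (real_monomial \<alpha> x))"
  unfolding real_monomial_def by (intro continuous_intros)

lemma real_monomial_vec_mul:
  "real_monomial \<alpha> (vec_mul a x) = (\<Prod>i\<in>UNIV. a$i ^ \<alpha> i) * real_monomial \<alpha> x"
  by (simp add: real_monomial_def vec_mul_def power_mult_distrib prod.distrib)

lemma distribution_zero: "distribution (\<lambda>\<phi>. 0)"
  unfolding distribution_def by simp

lemma distribution_add: "distribution T \<Longrightarrow> distribution S \<Longrightarrow> distribution (\<lambda>\<phi>. T \<phi> + S \<phi>)"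
  unfolding distribution_def by (auto intro: tendsto_add simp: algebra_simps)

lemma distribution_cmult: "distribution T \<Longrightarrow> distribution (\<lambda>\<phi>. c * T \<phi>)"
  unfolding distribution_def by (auto intro: tendsto_mult_left simp: algebra_simps)

lemma distribution_integral_mult:
  fixes p :: "'n::finite testfun"
  assumes p: "continuous_on UNIV p"
  shows "distribution (\<lambda>\<phi>. if test_fun \<phi> then LINT x|lborel. p x * \<phi> x else 0)"
  unfolding distribution_def
proof (intro conjI allI impI)
  fix \<phi> \<psi> :: "'n testfun" assume test: "test_fun \<phi>" "test_fun \<psi>"
  have "(LINT x|lborel. p x * (\<phi> x + \<psi> x)) = (LINT x|lborel. p x * \<phi> x + p x * \<psi> x)"
    by (simp add: distrib_left)
  also have "\<dots> = (LINT x|lborel. p x * \<phi> x) + (LINT x|lborel. p x * \<psi> x)"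
    using test by (intro Bochner_Integration.integral_add integrable_mult_test_fun[OF p])
  finally show "(if test_fun (\<lambda>x. \<phi> x + \<psi> x) then LINT x|lborel. p x * (\<phi> x + \<psi> x) else 0)
      = (if test_fun \<phi> then LINT x|lborel. p x * \<phi> x else 0)
        + (if test_fun \<psi> then LINT x|lborel. p x * \<psi> x else 0)"
    using test test_fun_add[OF test] by simp
next
  fix \<phi> :: "'n testfun" and c assume test: "test_fun \<phi>"
  have "(LINT x|lborel. p x * (c * \<phi> x)) = c * (LINT x|lborel. p x * \<phi> x)"
    by (simp add: mult.left_commute)
  then show "(if test_fun (\<lambda>x. c * \<phi> x) then LINT x|lborel. p x * (c * \<phi> x) else 0)
      = c * (if test_fun \<phi> then LINT x|lborel. p x * \<phi> x else 0)"
    using test test_fun_cmult[OF test] by simp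
next
  fix \<phi>s :: "nat \<Rightarrow> 'n testfun" and \<phi> assume D: "D_conv \<phi>s \<phi>"
  then have test: "\<And>k. test_fun (\<phi>s k)" "test_fun \<phi>" unfolding D_conv_def by auto
  from D obtain K0 where K0: "compact K0" "\<And>k. {x. \<phi>s k x \<noteq> 0} \<subseteq> K0"
    unfolding D_conv_def by auto
  have "uniform_limit UNIV (\<lambda>k. iter_partial [] (\<phi>s k)) (iter_partial [] \<phi>) sequentially"
    using D unfolding D_conv_def by blast
  then have "(\<lambda>k. LINT x|lborel. p x * \<phi>s k x) \<longlonglongrightarrow> (LINT x|lborel. p x * \<phi> x)"
  proof (intro tendsto_integral_mult_uniform_limit[OF _ p], simp)
    show "compact (K0 \<union> closure {x. \<phi> x \<noteq> 0})"
      using K0(1) compact_closure_support[OF test(2)] by blast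
    show "continuous_on UNIV (\<phi>s k)" "continuous_on UNIV \<phi>" for k
      using test by (simp_all add: continuous_on_test_fun)
    show "x \<notin> K0 \<union> closure {x. \<phi> x \<noteq> 0} \<Longrightarrow> \<phi>s k x = 0" for k x
      using K0(2) by auto
    show "x \<notin> K0 \<union> closure {x. \<phi> x \<noteq> 0} \<Longrightarrow> \<phi> x = 0" for x
      using closure_subset[of "{x. \<phi> x \<noteq> 0}"] by auto
  qed
  then show "(\<lambda>k. if test_fun (\<phi>s k) then LINT x|lborel. p x * \<phi>s k x else 0)
      \<longlonglongrightarrow> (if test_fun \<phi> then LINT x|lborel. p x * \<phi> x else 0)"
    using test by simp
qed simp

lemma distribution_monomial_distr: "distribution (monomial_distr \<alpha>)"
  using distribution_integral_mult[OF continuous_on_real_monomial]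
  by (simp add: monomial_distr_eq[abs_def])

definition dilation_const :: "real^'n::finite \<Rightarrow> complex" where
  "dilation_const a = of_real (sigma_sign a / (\<Prod>i\<in>UNIV. a$i))"

definition dilate_test :: "real^'n::finite \<Rightarrow> 'n testfun \<Rightarrow> 'n testfun" where
  "dilate_test a \<phi> = (\<lambda>x. dilation_const a * \<phi> (vec_mul (\<chi> i. 1 / a$i) x))"

lemma dilation_eq: "dilation a T = (\<lambda>\<phi>. T (dilate_test a \<phi>))"
  by (simp add: dilation_def dilate_test_def dilation_const_def vec_mul_def)

lemma abs_prod_mult_dilation_const:
  assumes "\<forall>i. a$i \<noteq> 0"
  shows "(\<Prod>i\<in>UNIV. \<bar>a$i\<bar>) *\<^sub>R dilation_const a = 1"
proof -
  have "(\<Prod>i\<in>UNIV. \<bar>a$i\<bar>) * sigma_sign a = (\<Prod>i\<in>UNIV. a$i)"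
    unfolding sigma_sign_def prod.distrib[symmetric] by simp
  moreover have "(\<Prod>i\<in>UNIV. a$i) \<noteq> 0" using assms by simp
  ultimately have "(\<Prod>i\<in>UNIV. \<bar>a$i\<bar>) * (sigma_sign a / (\<Prod>i\<in>UNIV. a$i)) = 1"
    by (simp add: times_divide_eq_right)
  then show ?thesis
    by (simp only: dilation_const_def scaleR_conv_of_real of_real_mult[symmetric] of_real_1)
qed

lemma test_fun_dilate_test_iff:
  assumes "\<forall>i. a$i \<noteq> 0"
  shows "test_fun (dilate_test a \<phi>) \<longleftrightarrow> test_fun \<phi>"
  unfolding dilate_test_def using assms
  by (intro test_fun_scaled_iff) (auto simp: dilation_const_def sigma_sign_def)

lemma D_conv_dilate_test:
  "D_conv \<phi>s \<phi> \<Longrightarrow> \<forall>i. a$i \<noteq> 0 \<Longrightarrow> D_conv (\<lambda>k. dilate_test a (\<phi>s k)) (dilate_test a \<phi>)"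
  unfolding dilate_test_def by (rule D_conv_scaled) auto

lemma distribution_dilation:
  fixes T :: "('n::finite) distr"
  assumes T: "distribution T" and a: "\<forall>i. a$i \<noteq> 0"
  shows "distribution (dilation a T)"
  unfolding distribution_def dilation_eq
proof (intro conjI allI impI)
  fix \<phi> :: "'n testfun" assume "\<not> test_fun \<phi>"
  then show "T (dilate_test a \<phi>) = 0"
    using T test_fun_dilate_test_iff[OF a] unfolding distribution_def by blast
next
  fix \<phi> \<psi> :: "'n testfun" assume "test_fun \<phi>" "test_fun \<psi>"
  moreover have "dilate_test a (\<lambda>x. \<phi> x + \<psi> x) = (\<lambda>x. dilate_test a \<phi> x + dilate_test a \<psi> x)"
    by (simp add: dilate_test_def distrib_left)
  ultimately show "T (dilate_test a (\<lambda>x. \<phi> x + \<psi> x)) = T (dilate_test a \<phi>) + T (dilate_test a \<psi>)"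
    using T test_fun_dilate_test_iff[OF a] unfolding distribution_def by simp
next
  fix \<phi> :: "'n testfun" and c assume "test_fun \<phi>"
  moreover have "dilate_test a (\<lambda>x. c * \<phi> x) = (\<lambda>x. c * dilate_test a \<phi> x)"
    by (simp add: dilate_test_def mult.left_commute)
  ultimately show "T (dilate_test a (\<lambda>x. c * \<phi> x)) = c * T (dilate_test a \<phi>)"
    using T test_fun_dilate_test_iff[OF a] unfolding distribution_def by simp
next
  fix \<phi>s :: "nat \<Rightarrow> 'n testfun" and \<phi> assume "D_conv \<phi>s \<phi>"
  then show "(\<lambda>k. T (dilate_test a (\<phi>s k))) \<longlonglongrightarrow> T (dilate_test a \<phi>)"
    using T D_conv_dilate_test[OF _ a] unfolding distribution_def by blast
qed

lemma lborel_eq_density_vec_mul: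
  fixes a :: "real^'n::finite"
  assumes "\<forall>i. a$i \<noteq> 0"
  shows "lborel = density (distr lborel borel (vec_mul a)) (\<lambda>_. ennreal (\<Prod>i\<in>UNIV. \<bar>a$i\<bar>))"
proof -
  have axis_Basis: "(Basis :: (real^'n) set) = (\<lambda>i. axis i 1) ` UNIV"
    by (auto simp: Basis_vec_def)
  have inj_axis: "inj (\<lambda>i::'n. axis i (1::real))"
    by (auto intro!: injI simp: axis_eq_axis)
  have "(\<Sum>j\<in>Basis. ((a \<bullet> j) * (x \<bullet> j)) *\<^sub>R j) $ k = vec_mul a x $ k" for x k
  proof -
    have "(\<Sum>j\<in>Basis. ((a \<bullet> j) * (x \<bullet> j)) *\<^sub>R j) $ k = (\<Sum>i\<in>UNIV. a$i * x$i * axis i 1 $ k)"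
      by (simp add: axis_Basis sum.reindex[OF inj_axis] inner_axis)
    also have "\<dots> = a$k * x$k"
      by (simp add: axis_def if_distrib cong: if_cong)
    finally show ?thesis by (simp add: vec_mul_def)
  qed
  then have "(\<lambda>x. 0 + (\<Sum>j\<in>Basis. ((a \<bullet> j) * (x \<bullet> j)) *\<^sub>R j)) = vec_mul a"
    by (simp add: fun_eq_iff vec_eq_iff)
  moreover have "(\<Prod>j\<in>Basis. \<bar>a \<bullet> j\<bar>) = (\<Prod>i\<in>UNIV. \<bar>a$i\<bar>)"
    by (simp add: axis_Basis prod.reindex[OF inj_axis] inner_axis)
  moreover have "lborel = density (distr lborel borel (\<lambda>x. 0 + (\<Sum>j\<in>Basis. ((a \<bullet> j) * (x \<bullet> j)) *\<^sub>R j)))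
      (\<lambda>_. (\<Prod>j\<in>Basis. \<bar>a \<bullet> j\<bar>))"
    using assms by (intro lborel_affine_euclidean) (auto simp: axis_Basis inner_axis)
  ultimately show ?thesis by simp
qed

lemma integral_lborel_vec_mul:
  fixes g :: "real^'n::finite \<Rightarrow> complex"
  assumes a: "\<forall>i. a$i \<noteq> 0" and g: "g \<in> borel_measurable borel"
  shows "(LINT x|lborel. g x) = (\<Prod>i\<in>UNIV. \<bar>a$i\<bar>) *\<^sub>R (LINT y|lborel. g (vec_mul a y))"
proof -
  have vec_mul_measurable: "vec_mul a \<in> measurable lborel borel"
    using borel_measurable_continuous_onI[OF linear_continuous_on[OF bounded_linear_vec_mul]] by simp
  have "(LINT x|lborel. g x)
      = (LINT x|density (distr lborel borel (vec_mul a)) (\<lambda>_. ennreal (\<Prod>i\<in>UNIV. \<bar>a$i\<bar>)). g x)"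
    by (subst lborel_eq_density_vec_mul[OF a]) (rule refl)
  also have "\<dots> = (LINT x|distr lborel borel (vec_mul a). (\<Prod>i\<in>UNIV. \<bar>a$i\<bar>) *\<^sub>R g x)"
    using g by (intro integral_density) (auto simp: prod_nonneg)
  also have "\<dots> = (LINT y|lborel. (\<Prod>i\<in>UNIV. \<bar>a$i\<bar>) *\<^sub>R g (vec_mul a y))"
    using g by (intro integral_distr[OF vec_mul_measurable]) simp
  finally show ?thesis by simp
qed

lemma dilation_monomial_distr:
  fixes a :: "real^'n::finite"
  assumes a: "\<forall>i. a$i \<noteq> 0"
  shows "dilation a (monomial_distr \<alpha>) = (\<lambda>\<phi>. of_real (\<Prod>i\<in>UNIV. a$i ^ \<alpha> i) * monomial_distr \<alpha> \<phi>)"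
proof
  fix \<phi> :: "'n testfun"
  let ?m = "\<lambda>x. complex_of_real (real_monomial \<alpha> x)"
  show "dilation a (monomial_distr \<alpha>) \<phi> = of_real (\<Prod>i\<in>UNIV. a$i ^ \<alpha> i) * monomial_distr \<alpha> \<phi>"
  proof (cases "test_fun \<phi>")
    case False
    then show ?thesis using test_fun_dilate_test_iff[OF a] by (simp add: dilation_eq monomial_distr_eq)
  next
    case True
    have "continuous_on UNIV (\<lambda>x. ?m x * dilate_test a \<phi> x)"
      using True a
      by (intro continuous_on_mult continuous_on_real_monomial continuous_on_test_fun)
        (simp add: test_fun_dilate_test_iff)
    then have "(LINT x|lborel. ?m x * dilate_test a \<phi> x)
        = (\<Prod>i\<in>UNIV. \<bar>a$i\<bar>) *\<^sub>R (LINT y|lborel. ?m (vec_mul a y) * dilate_test a \<phi> (vec_mul a y))"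
      using a by (intro integral_lborel_vec_mul borel_measurable_continuous_onI)
    also have "\<dots> = (\<Prod>i\<in>UNIV. \<bar>a$i\<bar>) *\<^sub>R
        (LINT y|lborel. (dilation_const a * of_real (\<Prod>i\<in>UNIV. a$i ^ \<alpha> i)) * (?m y * \<phi> y))"
      using a by (simp add: dilate_test_def real_monomial_vec_mul vec_mul_inverse mult_ac)
    also have "\<dots> = ((\<Prod>i\<in>UNIV. \<bar>a$i\<bar>) *\<^sub>R dilation_const a)
        * of_real (\<Prod>i\<in>UNIV. a$i ^ \<alpha> i) * (LINT y|lborel. ?m y * \<phi> y)"
      by (simp only: integral_mult_right_zero) (simp add: scaleR_conv_of_real mult_ac)
    finally show ?thesis
      using True a by (simp add: dilation_eq monomial_distr_eq test_fun_dilate_test_iff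
          abs_prod_mult_dilation_const)
  qed
qed

section \<open>Polynomial distributions\<close>

inductive poly_distr :: "('n::finite) distr \<Rightarrow> bool" where
  poly_distr_zero: "poly_distr (\<lambda>\<phi>. 0)"
| poly_distr_add_monomial: "poly_distr Q \<Longrightarrow> poly_distr (\<lambda>\<phi>. Q \<phi> + c * monomial_distr \<alpha> \<phi>)"

lemma distribution_poly_distr: "poly_distr Q \<Longrightarrow> distribution Q"
  by (induction rule: poly_distr.induct)
    (auto intro!: distribution_add distribution_cmult distribution_zero distribution_monomial_distr)

lemma poly_distr_add: "poly_distr R \<Longrightarrow> poly_distr Q \<Longrightarrow> poly_distr (\<lambda>\<phi>. Q \<phi> + R \<phi>)"
proof (induction rule: poly_distr.induct)
  case (poly_distr_add_monomial R c \<alpha>)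
  then have "poly_distr (\<lambda>\<phi>. (Q \<phi> + R \<phi>) + c * monomial_distr \<alpha> \<phi>)"
    by (intro poly_distr.poly_distr_add_monomial)
  then show ?case by (simp add: add.assoc)
qed simp

lemma poly_distr_cmult: "poly_distr Q \<Longrightarrow> poly_distr (\<lambda>\<phi>. c * Q \<phi>)"
proof (induction rule: poly_distr.induct)
  case (poly_distr_add_monomial Q d \<alpha>)
  then have "poly_distr (\<lambda>\<phi>. c * Q \<phi> + (c * d) * monomial_distr \<alpha> \<phi>)"
    by (intro poly_distr.poly_distr_add_monomial)
  then show ?case by (simp add: algebra_simps)
qed (simp add: poly_distr_zero)

lemma poly_distr_monomial_distr: "poly_distr (monomial_distr \<alpha>)"
  using poly_distr_add_monomial[OF poly_distr_zero, of 1 \<alpha>] by simp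

lemma M_class_linear:
  assumes "L \<in> M_class" "distribution T" "distribution S"
  shows "L (\<lambda>\<phi>. T \<phi> + c * S \<phi>) = (\<lambda>\<phi>. L T \<phi> + c * L S \<phi>)"
  using assms distribution_cmult[OF assms(3)]
  by (simp add: M_class_def cont_lin_op_def distributions_def)

lemma M_class_zero: "L \<in> M_class \<Longrightarrow> L (\<lambda>\<phi>. 0) = (\<lambda>\<phi>. 0)"
  using M_class_linear[OF _ distribution_zero distribution_zero, of L "-1"] by simp

lemma dilation_add_cmult:
  "dilation a (\<lambda>\<phi>. T \<phi> + c * S \<phi>) = (\<lambda>\<phi>. dilation a T \<phi> + c * dilation a S \<phi>)"
  by (simp add: dilation_def)

lemma dilation_cmult: "dilation a (\<lambda>\<phi>. c * T \<phi>) = (\<lambda>\<phi>. c * dilation a T \<phi>)"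
  by (simp add: dilation_def)

lemma dilation_commute_poly_distr:
  fixes a :: "real^'n::finite"
  assumes L: "L \<in> M_class" and a: "\<forall>i. a$i \<noteq> 0"
  shows "poly_distr Q \<Longrightarrow> L (dilation a Q) = dilation a (L Q)"
proof (induction rule: poly_distr.induct)
  case poly_distr_zero
  have "dilation a (\<lambda>\<phi>. 0) = (\<lambda>\<phi>. 0)" by (simp add: dilation_def)
  then show ?case using M_class_zero[OF L] by simp
next
  case (poly_distr_add_monomial Q c \<alpha>)
  obtain k where k: "L (monomial_distr \<alpha>) = (\<lambda>\<phi>. k * monomial_distr \<alpha> \<phi>)"
    using L unfolding M_class_def by blast
  define a\<alpha> where "a\<alpha> = complex_of_real (\<Prod>i\<in>UNIV. a$i ^ \<alpha> i)"
  have dilation_monomial: "dilation a (monomial_distr \<alpha>) = (\<lambda>\<phi>. a\<alpha> * monomial_distr \<alpha> \<phi>)"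
    unfolding a\<alpha>_def by (rule dilation_monomial_distr[OF a])
  have Q: "distribution Q" "distribution (dilation a Q)"
    using distribution_poly_distr[OF poly_distr_add_monomial.hyps] distribution_dilation[OF _ a] by auto
  note M = distribution_monomial_distr[of \<alpha>]
  have "L (dilation a (\<lambda>\<phi>. Q \<phi> + c * monomial_distr \<alpha> \<phi>))
      = L (\<lambda>\<phi>. dilation a Q \<phi> + (c * a\<alpha>) * monomial_distr \<alpha> \<phi>)"
    by (simp add: dilation_add_cmult dilation_monomial mult.assoc)
  also have "\<dots> = (\<lambda>\<phi>. dilation a (L Q) \<phi> + c * (a\<alpha> * (k * monomial_distr \<alpha> \<phi>)))"
    using M_class_linear[OF L Q(2) M, of "c * a\<alpha>"] poly_distr_add_monomial.IH k by (simp add: mult_ac)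
  also have "\<dots> = dilation a (\<lambda>\<phi>. L Q \<phi> + c * L (monomial_distr \<alpha>) \<phi>)"
    unfolding dilation_add_cmult k dilation_cmult dilation_monomial by (simp add: mult_ac)
  also have "\<dots> = dilation a (L (\<lambda>\<phi>. Q \<phi> + c * monomial_distr \<alpha> \<phi>))"
    using M_class_linear[OF L Q(1) M] by simp
  finally show ?case .
qed

section \<open>Finite interpolation\<close>

definition lin_comb :: "(nat \<Rightarrow> complex) \<Rightarrow> ('a \<Rightarrow> complex) list \<Rightarrow> 'a \<Rightarrow> complex" where
  "lin_comb c B = (\<lambda>x. \<Sum>i<length B. c i * (B!i) x)"

definition lin_span :: "('a \<Rightarrow> complex) list \<Rightarrow> ('a \<Rightarrow> complex) set" where
  "lin_span B = range (\<lambda>c. lin_comb c B)"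

fun lin_independent :: "('a \<Rightarrow> complex) list \<Rightarrow> bool" where
  "lin_independent [] = True"
| "lin_independent (\<psi> # B) \<longleftrightarrow> lin_independent B \<and> \<psi> \<notin> lin_span B"

lemma lin_comb_Nil: "lin_comb c [] = (\<lambda>x. 0)"
  by (simp add: lin_comb_def)

lemma lin_comb_Cons: "lin_comb c (\<phi> # B) = (\<lambda>x. c 0 * \<phi> x + lin_comb (\<lambda>i. c (Suc i)) B x)"
  unfolding lin_comb_def length_Cons sum.lessThan_Suc_shift by simp

lemma lin_span_Cons: "lin_span B \<subseteq> lin_span (\<phi> # B)"
proof
  fix f assume "f \<in> lin_span B"
  then obtain c where "f = lin_comb c B" unfolding lin_span_def by blast
  then have "f = lin_comb (case_nat 0 c) (\<phi> # B)" by (simp add: lin_comb_Cons)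
  then show "f \<in> lin_span (\<phi> # B)" unfolding lin_span_def by blast
qed

lemma in_lin_span_Cons: "\<phi> \<in> lin_span (\<phi> # B)"
proof -
  have "\<phi> = lin_comb (case_nat 1 (\<lambda>_. 0)) (\<phi> # B)"
    unfolding lin_comb_Cons by (simp add: lin_comb_def)
  then show ?thesis unfolding lin_span_def by blast
qed

locale separating_functionals =
  fixes V :: "('a \<Rightarrow> complex) set" and P :: "(('a \<Rightarrow> complex) \<Rightarrow> complex) set"
  assumes V_zero: "(\<lambda>x. 0) \<in> V"
    and V_add: "f \<in> V \<Longrightarrow> g \<in> V \<Longrightarrow> (\<lambda>x. f x + g x) \<in> V"
    and V_cmult: "f \<in> V \<Longrightarrow> (\<lambda>x. c * f x) \<in> V"
    and P_additive: "R \<in> P \<Longrightarrow> f \<in> V \<Longrightarrow> g \<in> V \<Longrightarrow> R (\<lambda>x. f x + g x) = R f + R g"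
    and P_homogeneous: "R \<in> P \<Longrightarrow> f \<in> V \<Longrightarrow> R (\<lambda>x. c * f x) = c * R f"
    and P_zero: "(\<lambda>f. 0) \<in> P"
    and P_add: "R \<in> P \<Longrightarrow> S \<in> P \<Longrightarrow> (\<lambda>f. R f + S f) \<in> P"
    and P_cmult: "R \<in> P \<Longrightarrow> (\<lambda>f. c * R f) \<in> P"
    and separating: "f \<in> V \<Longrightarrow> \<forall>R\<in>P. R f = 0 \<Longrightarrow> f = (\<lambda>x. 0)"
begin

lemma lin_comb_in_V: "set B \<subseteq> V \<Longrightarrow> lin_comb c B \<in> V"
  by (induction B arbitrary: c) (simp_all add: lin_comb_Nil lin_comb_Cons V_zero V_add V_cmult)

lemma linear_on_V_lin_comb:
  assumes add: "\<And>f g. f \<in> V \<Longrightarrow> g \<in> V \<Longrightarrow> G (\<lambda>x. f x + g x) = G f + G g"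
    and cmult: "\<And>f c. f \<in> V \<Longrightarrow> G (\<lambda>x. c * f x) = c * G f"
  shows "set B \<subseteq> V \<Longrightarrow> G (lin_comb c B) = (\<Sum>i<length B. c i * G (B!i))"
proof (induction B arbitrary: c)
  case Nil
  have "G (\<lambda>x. 0 * 0) = 0 * G (\<lambda>x. 0)" by (rule cmult[OF V_zero])
  then show ?case by (simp add: lin_comb_Nil)
next
  case (Cons \<phi> B)
  then have "G (lin_comb c (\<phi> # B)) = G (\<lambda>x. c 0 * \<phi> x) + G (lin_comb (\<lambda>i. c (Suc i)) B)"
    unfolding lin_comb_Cons by (intro add V_cmult lin_comb_in_V) auto
  then show ?case using Cons unfolding length_Cons sum.lessThan_Suc_shift by (simp add: cmult)
qed

lemma P_lin_comb: "R \<in> P \<Longrightarrow> set B \<subseteq> V \<Longrightarrow> R (lin_comb c B) = (\<Sum>i<length B. c i * R (B!i))"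
  by (rule linear_on_V_lin_comb) (auto intro: P_additive P_homogeneous)

lemma P_sum: "(\<And>i. i < (n::nat) \<Longrightarrow> D i \<in> P) \<Longrightarrow> (\<lambda>g. \<Sum>i<n. c i * D i g) \<in> P"
  by (induction n) (simp_all add: P_zero P_add P_cmult)

definition interpolating :: "('a \<Rightarrow> complex) list \<Rightarrow> bool" where
  "interpolating B \<longleftrightarrow> (\<forall>v. \<exists>Q\<in>P. \<forall>j<length B. Q (B!j) = v j)"

lemma interpolating_dual_family:
  assumes "interpolating B"
  obtains D where "\<And>i. D i \<in> P" "\<And>i j. j < length B \<Longrightarrow> D i (B!j) = (if i = j then 1 else 0)"
proof -
  have "\<exists>Q\<in>P. \<forall>j<length B. Q (B!j) = (if i = j then 1 else 0)" for i
    using assms unfolding interpolating_def by (rule spec)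
  then obtain D where "\<forall>i. D i \<in> P \<and> (\<forall>j<length B. D i (B!j) = (if i = j then 1 else 0))"
    by metis
  then show ?thesis using that by blast
qed

lemma annihilator_exists:
  assumes B: "interpolating B" "set B \<subseteq> V" and \<psi>: "\<psi> \<in> V" "\<psi> \<notin> lin_span B"
  shows "\<exists>R\<in>P. (\<forall>j<length B. R (B!j) = 0) \<and> R \<psi> \<noteq> 0"
proof (rule ccontr)
  assume "\<not> ?thesis"
  then have vanish: "R \<psi> = 0" if "R \<in> P" "\<forall>j<length B. R (B!j) = 0" for R
    using that by blast
  obtain D where D: "\<And>i. D i \<in> P" "\<And>i j. j < length B \<Longrightarrow> D i (B!j) = (if i = j then 1 else 0)"
    using interpolating_dual_family[OF B(1)] by blast
  define c where "c i = D i \<psi>" for i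
  have "R (\<lambda>x. \<psi> x + (-1) * lin_comb c B x) = 0" if R: "R \<in> P" for R
  proof -
    \<comment> \<open>subtracting from R its expansion in the dual family gives a functional vanishing on B\<close>
    have "(\<lambda>g. R g + (-1) * (\<Sum>i<length B. R (B!i) * D i g)) \<psi> = 0"
    proof (rule vanish)
      show "(\<lambda>g. R g + (-1) * (\<Sum>i<length B. R (B!i) * D i g)) \<in> P"
        using R D(1) by (intro P_add P_cmult P_sum)
      show "\<forall>j<length B. R (B!j) + (-1) * (\<Sum>i<length B. R (B!i) * D i (B!j)) = 0"
        using D(2) by (simp add: if_distrib[of "\<lambda>t. _ * t"] cong: if_cong)
    qed
    then have "R \<psi> = R (lin_comb c B)"
      using P_lin_comb[OF R B(2)] by (simp add: c_def mult.commute)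
    moreover have "R (\<lambda>x. \<psi> x + (-1) * lin_comb c B x) = R \<psi> + (-1) * R (lin_comb c B)"
      by (simp only: P_additive[OF R \<psi>(1) V_cmult[OF lin_comb_in_V[OF B(2)]]]
          P_homogeneous[OF R lin_comb_in_V[OF B(2)]])
    ultimately show ?thesis by simp
  qed
  then have "(\<lambda>x. \<psi> x + (-1) * lin_comb c B x) = (\<lambda>x. 0)"
    using B(2) \<psi>(1) by (intro separating V_add V_cmult lin_comb_in_V) auto
  then have "\<psi> = lin_comb c B" by (simp add: fun_eq_iff)
  then show False using \<psi>(2) unfolding lin_span_def by blast
qed

lemma interpolating_Cons:
  assumes B: "interpolating B" "set B \<subseteq> V" and \<psi>: "\<psi> \<in> V" "\<psi> \<notin> lin_span B"
  shows "interpolating (\<psi> # B)"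
  unfolding interpolating_def
proof
  fix v :: "nat \<Rightarrow> complex"
  obtain R where R: "R \<in> P" "\<forall>j<length B. R (B!j) = 0" "R \<psi> \<noteq> 0"
    using annihilator_exists[OF assms] by blast
  obtain Q where Q: "Q \<in> P" "\<forall>j<length B. Q (B!j) = v (Suc j)"
    using B(1) unfolding interpolating_def by (elim allE[of _ "\<lambda>j. v (Suc j)"]) blast
  let ?Q = "\<lambda>g. Q g + ((v 0 - Q \<psi>) / R \<psi>) * R g"
  have "?Q \<in> P" using Q R by (intro P_add P_cmult)
  moreover have "?Q ((\<psi> # B)!j) = v j" if "j < length (\<psi> # B)" for j
    using Q R that by (cases j) auto
  ultimately show "\<exists>Q\<in>P. \<forall>j<length (\<psi> # B). Q ((\<psi> # B)!j) = v j"
    by (intro bexI[where x = ?Q]) auto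
qed

lemma interpolating_lin_independent: "lin_independent B \<Longrightarrow> set B \<subseteq> V \<Longrightarrow> interpolating B"
proof (induction B)
  case Nil then show ?case using P_zero by (auto simp: interpolating_def)
next
  case (Cons \<psi> B)
  then have "lin_independent B" "set B \<subseteq> V" "\<psi> \<in> V" "\<psi> \<notin> lin_span B" by auto
  then show ?case using Cons.IH by (intro interpolating_Cons) auto
qed

lemma lin_independent_spanning:
  "set L \<subseteq> V \<Longrightarrow> \<exists>B. lin_independent B \<and> set B \<subseteq> V \<and> set L \<subseteq> lin_span B"
proof (induction L)
  case Nil then show ?case by (intro exI[of _ "[]"]) simp
next
  case (Cons \<phi> L)
  then obtain B where B: "lin_independent B" "set B \<subseteq> V" "set L \<subseteq> lin_span B" by auto
  show ?case
  proof (cases "\<phi> \<in> lin_span B")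
    case True then show ?thesis using B by auto
  next
    case False
    have "set (\<phi> # L) \<subseteq> lin_span (\<phi> # B)"
      using B(3) lin_span_Cons in_lin_span_Cons by auto
    moreover have "lin_independent (\<phi> # B)" "set (\<phi> # B) \<subseteq> V"
      using B(1,2) False Cons.prems by auto
    ultimately show ?thesis by blast
  qed
qed

theorem finite_interpolation:
  assumes F: "finite F" "F \<subseteq> V"
    and add: "\<And>f g. f \<in> V \<Longrightarrow> g \<in> V \<Longrightarrow> T (\<lambda>x. f x + g x) = T f + T g"
    and cmult: "\<And>f c. f \<in> V \<Longrightarrow> T (\<lambda>x. c * f x) = c * T f"
  shows "\<exists>Q\<in>P. \<forall>\<phi>\<in>F. Q \<phi> = T \<phi>"
proof -
  obtain L where "set L = F" using F(1) finite_list by blast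
  then obtain B where B: "lin_independent B" "set B \<subseteq> V" "F \<subseteq> lin_span B"
    using lin_independent_spanning[of L] F(2) by auto
  obtain Q where Q: "Q \<in> P" "\<forall>j<length B. Q (B!j) = T (B!j)"
    using interpolating_lin_independent[OF B(1,2)] unfolding interpolating_def
    by (elim allE[of _ "\<lambda>j. T (B!j)"]) blast
  have "Q (lin_comb c B) = T (lin_comb c B)" for c
  proof -
    have "Q (lin_comb c B) = (\<Sum>i<length B. c i * Q (B!i))" by (rule P_lin_comb[OF Q(1) B(2)])
    also have "\<dots> = (\<Sum>i<length B. c i * T (B!i))" using Q(2) by (intro sum.cong) auto
    also have "\<dots> = T (lin_comb c B)"
      by (rule linear_on_V_lin_comb[where G = T, OF add cmult B(2), symmetric])
    finally show ?thesis .
  qed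
  then have "\<forall>\<phi>\<in>F. Q \<phi> = T \<phi>" using B(3) unfolding lin_span_def by auto
  then show ?thesis using Q(1) by blast
qed

end

section \<open>Moments separate test functions\<close>

definition monomial_sum :: "(('n::finite \<Rightarrow> nat) \<times> real) list \<Rightarrow> real^'n \<Rightarrow> real" where
  "monomial_sum cs x = (\<Sum>p\<leftarrow>cs. snd p * real_monomial (fst p) x)"

lemma monomial_sum_append: "monomial_sum (cs @ ds) x = monomial_sum cs x + monomial_sum ds x"
  by (simp add: monomial_sum_def)

lemma real_monomial_add: "real_monomial (\<lambda>i. \<alpha> i + \<beta> i) x = real_monomial \<alpha> x * real_monomial \<beta> x"
  by (simp add: real_monomial_def power_add prod.distrib)

lemma real_monomial_coordinate: "real_monomial (\<lambda>j. if j = i then 1 else 0) x = x$i"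
proof -
  have "real_monomial (\<lambda>j. if j = i then 1 else 0) x = (\<Prod>j\<in>UNIV. if j = i then x$j else 1)"
    unfolding real_monomial_def by (rule prod.cong) auto
  then show ?thesis by simp
qed

lemma monomial_sum_mult:
  "\<exists>es. (\<lambda>x. monomial_sum cs x * monomial_sum ds x) = monomial_sum es"
proof (induction cs)
  case Nil then show ?case by (intro exI[of _ "[]"]) (simp add: monomial_sum_def fun_eq_iff)
next
  case (Cons p cs)
  then obtain es where es: "(\<lambda>x. monomial_sum cs x * monomial_sum ds x) = monomial_sum es" ..
  let ?p_ds = "map (\<lambda>q. ((\<lambda>i. fst p i + fst q i), snd p * snd q)) ds"
  have "monomial_sum ?p_ds x = snd p * real_monomial (fst p) x * monomial_sum ds x" for x
    by (induction ds) (simp_all add: monomial_sum_def real_monomial_add algebra_simps)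
  then have "(\<lambda>x. monomial_sum (p # cs) x * monomial_sum ds x) = monomial_sum (?p_ds @ es)"
    using es by (simp add: fun_eq_iff monomial_sum_append monomial_sum_def algebra_simps)
  then show ?case ..
qed

lemma linear_eq_monomial_sum:
  fixes g :: "real^'n::finite \<Rightarrow> real"
  assumes "linear g"
  shows "\<exists>cs. g = monomial_sum cs"
proof -
  obtain L where L: "set L = (UNIV :: 'n set)" "distinct L"
    using finite_distinct_list[of "UNIV :: 'n set"] by auto
  let ?cs = "map (\<lambda>i. ((\<lambda>j. if j = i then 1 else 0), g (axis i 1))) L"
  have "g x = monomial_sum ?cs x" for x
  proof -
    have "g x = g (\<Sum>i\<in>UNIV. x$i *\<^sub>R axis i 1)"
      using basis_expansion[of x] by (simp add: scalar_mult_eq_scaleR)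
    also have "\<dots> = (\<Sum>i\<in>UNIV. x$i * g (axis i 1))"
      by (simp add: linear_sum[OF assms] linear_scale[OF assms])
    also have "\<dots> = monomial_sum ?cs x"
      unfolding monomial_sum_def using L
      by (simp add: sum_list_distinct_conv_sum_set comp_def real_monomial_coordinate mult.commute)
    finally show ?thesis .
  qed
  then show ?thesis by blast
qed

lemma real_polynomial_function_eq_monomial_sum:
  fixes g :: "real^'n::finite \<Rightarrow> real"
  assumes "real_polynomial_function g"
  shows "\<exists>cs. g = monomial_sum cs"
  using assms
proof (induction rule: real_polynomial_function.induct)
  case (linear f) then show ?case by (intro linear_eq_monomial_sum bounded_linear.linear)
next
  case (const c)
  have "(\<lambda>x. c) = monomial_sum [((\<lambda>_. 0), c)]"
    by (simp add: monomial_sum_def real_monomial_def fun_eq_iff)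
  then show ?case ..
next
  case (add f g)
  then obtain cs ds where "f = monomial_sum cs" "g = monomial_sum ds" by blast
  then have "(\<lambda>x. f x + g x) = monomial_sum (cs @ ds)" by (simp add: fun_eq_iff monomial_sum_append)
  then show ?case ..
next
  case (mult f g)
  then obtain cs ds where "f = monomial_sum cs" "g = monomial_sum ds" by blast
  then show ?case using monomial_sum_mult by simp
qed

lemma continuous_on_monomial_sum: "continuous_on UNIV (\<lambda>x. complex_of_real (monomial_sum cs x))"
  unfolding monomial_sum_def real_monomial_def
  by (induction cs) (auto intro!: continuous_intros)

lemma integral_monomial_sum_mult_eq_0:
  fixes f :: "'n::finite testfun"
  assumes f: "test_fun f" and moments: "\<And>\<alpha>. monomial_distr \<alpha> f = 0"
  shows "(LINT x|lborel. of_real (monomial_sum cs x) * f x) = 0"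
proof (induction cs)
  case Nil then show ?case by (simp add: monomial_sum_def)
next
  case (Cons p cs)
  have "(\<lambda>x. of_real (monomial_sum (p # cs) x) * f x) = (\<lambda>x.
      of_real (snd p) * (of_real (real_monomial (fst p) x) * f x) + of_real (monomial_sum cs x) * f x)"
    by (simp add: monomial_sum_def fun_eq_iff algebra_simps)
  moreover have "integrable lborel (\<lambda>x. of_real (real_monomial (fst p) x) * f x)"
    by (rule integrable_mult_test_fun[OF continuous_on_real_monomial f])
  moreover have "integrable lborel (\<lambda>x. of_real (monomial_sum cs x) * f x)"
    by (rule integrable_mult_test_fun[OF continuous_on_monomial_sum f])
  moreover have "(LINT x|lborel. of_real (real_monomial (fst p) x) * f x) = 0"
    using moments[of "fst p"] f by (simp add: monomial_distr_eq)
  ultimately show ?case using Cons by simp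
qed

lemma integral_real_polynomial_mult_eq_0:
  fixes f :: "'n::finite testfun"
  assumes "test_fun f" "\<And>\<alpha>. monomial_distr \<alpha> f = 0" "real_polynomial_function g"
  shows "(LINT x|lborel. of_real (g x) * f x) = 0"
  using real_polynomial_function_eq_monomial_sum[OF assms(3)]
    integral_monomial_sum_mult_eq_0[OF assms(1,2)] by auto

lemma integral_cnj_mult_self_eq_0:
  fixes f :: "'n::finite testfun"
  assumes f: "test_fun f" and moments: "\<And>\<alpha>. monomial_distr \<alpha> f = 0"
  shows "(LINT x|lborel. cnj (f x) * f x) = 0"
proof -
  let ?K = "closure {x. f x \<noteq> 0}"
  define C where "C = (LINT x|lborel. norm (f x))"
  have f_cont: "continuous_on UNIV f" by (rule continuous_on_test_fun[OF f])
  have int_f: "integrable lborel f"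
    using integrable_mult_test_fun[OF continuous_on_const[of UNIV 1] f] by simp
  have int_cnj: "integrable lborel (\<lambda>x. cnj (f x) * f x)"
    using f f_cont by (intro integrable_mult_test_fun continuous_intros)
  have bound: "norm (LINT x|lborel. cnj (f x) * f x) \<le> 2 * e * C" if e: "e > 0" for e
  proof -
    \<comment> \<open>approximate cnj f on the support of f by G = g1 + i g2 with g1, g2 real polynomials\<close>
    obtain g1 where g1: "real_polynomial_function g1" "\<And>x. x \<in> ?K \<Longrightarrow> \<bar>Re (cnj (f x)) - g1 x\<bar> < e"
      using Stone_Weierstrass_real_polynomial_function[OF compact_closure_support[OF f] _ e]
        continuous_on_subset[OF f_cont subset_UNIV] by (metis continuous_on_Re continuous_on_cnj)
    obtain g2 where g2: "real_polynomial_function g2" "\<And>x. x \<in> ?K \<Longrightarrow> \<bar>Im (cnj (f x)) - g2 x\<bar> < e"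
      using Stone_Weierstrass_real_polynomial_function[OF compact_closure_support[OF f] _ e]
        continuous_on_subset[OF f_cont subset_UNIV] by (metis continuous_on_Im continuous_on_cnj)
    define G where "G x = of_real (g1 x) + \<i> * of_real (g2 x)" for x
    have int_g: "integrable lborel (\<lambda>x. of_real (g x) * f x)" if g: "real_polynomial_function g" for g
    proof -
      obtain cs where "g = monomial_sum cs"
        using real_polynomial_function_eq_monomial_sum[OF g] by blast
      then show ?thesis using integrable_mult_test_fun[OF continuous_on_monomial_sum f] by simp
    qed
    have int_G: "integrable lborel (\<lambda>x. G x * f x)"
      using int_g[OF g1(1)] int_g[OF g2(1)] by (simp add: G_def distrib_right mult.assoc)
    have "(LINT x|lborel. G x * f x)
        = (LINT x|lborel. of_real (g1 x) * f x) + \<i> * (LINT x|lborel. of_real (g2 x) * f x)"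
      using int_g[OF g1(1)] int_g[OF g2(1)] by (simp add: G_def distrib_right mult.assoc)
    also have "\<dots> = 0"
      using integral_real_polynomial_mult_eq_0[OF f moments] g1(1) g2(1) by simp
    finally have "(LINT x|lborel. cnj (f x) * f x) = (LINT x|lborel. (cnj (f x) - G x) * f x)"
      using int_cnj int_G by (simp add: left_diff_distrib)
    also have "norm \<dots> \<le> 2 * e * C"
      unfolding C_def
    proof (rule norm_integral_mult_le)
      show "integrable lborel (\<lambda>x. (cnj (f x) - G x) * f x)"
        using int_cnj int_G by (simp add: left_diff_distrib)
      show "norm (cnj (f x) - G x) \<le> 2 * e" if "f x \<noteq> 0" for x
      proof -
        have "x \<in> ?K" using that closure_subset[of "{x. f x \<noteq> 0}"] by blast
        then have "\<bar>Re (cnj (f x) - G x)\<bar> + \<bar>Im (cnj (f x) - G x)\<bar> \<le> 2 * e"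
          using g1(2)[OF \<open>x \<in> ?K\<close>] g2(2)[OF \<open>x \<in> ?K\<close>] by (simp add: G_def)
        then show ?thesis using cmod_le[of "cnj (f x) - G x"] by linarith
      qed
    qed (rule int_f)
    finally show ?thesis .
  qed
  have "C \<ge> 0" unfolding C_def by simp
  have "norm (LINT x|lborel. cnj (f x) * f x) \<le> 0 + e" if "e > 0" for e
  proof -
    have "2 * (e / (2 * (C + 1))) * C \<le> e"
      using \<open>C \<ge> 0\<close> that by (simp add: field_simps)
    then show ?thesis using bound[of "e / (2 * (C + 1))"] \<open>C \<ge> 0\<close> that by simp
  qed
  then have "norm (LINT x|lborel. cnj (f x) * f x) \<le> 0" by (rule field_le_epsilon)
  then show ?thesis by simp
qed

lemma continuous_eq_0_if_integral_cnj_mult_self_eq_0: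
  fixes f :: "'a::euclidean_space \<Rightarrow> complex"
  assumes cont: "continuous_on UNIV f" and int: "integrable lborel (\<lambda>x. cnj (f x) * f x)"
    and zero: "(LINT x|lborel. cnj (f x) * f x) = 0"
  shows "f = (\<lambda>x. 0)"
proof -
  have cnj_mult_self: "cnj (f x) * f x = of_real ((norm (f x))\<^sup>2)" for x
    by (metis complex_norm_square mult.commute)
  have "integrable lborel (\<lambda>x. (norm (f x))\<^sup>2)"
    using integrable_norm[OF int] by (simp add: norm_mult power2_eq_square)
  moreover have "(LINT x|lborel. (norm (f x))\<^sup>2) = 0"
    using zero unfolding cnj_mult_self integral_complex_of_real by simp
  ultimately have "AE x in lborel. f x = 0"
    by (simp add: integral_nonneg_eq_0_iff_AE)
  then have ae: "AE x \<in> UNIV in lebesgue. x \<in> {x. f x = 0}"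
    by (auto intro: AE_completion)
  have "closed {x. f x = 0}"
    using continuous_closed_preimage_constant[OF cont closed_UNIV] by simp
  then show ?thesis
    using mem_closed_if_AE_lebesgue_open[OF open_UNIV _ ae] by (auto simp: fun_eq_iff)
qed

lemma test_fun_eq_0_if_moments_eq_0:
  assumes "test_fun f" "\<And>\<alpha>. monomial_distr \<alpha> f = 0"
  shows "f = (\<lambda>x. 0)"
proof (rule continuous_eq_0_if_integral_cnj_mult_self_eq_0)
  show "continuous_on UNIV f" by (rule continuous_on_test_fun[OF assms(1)])
  then show "integrable lborel (\<lambda>x. cnj (f x) * f x)"
    by (intro integrable_mult_test_fun[OF _ assms(1)] continuous_on_cnj)
qed (rule integral_cnj_mult_self_eq_0[OF assms])

section \<open>Density of polynomial distributions\<close>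

lemma topspace_distr_topology: "topspace (distr_topology :: ('n::finite) distr topology) = distributions"
  by (simp add: distr_topology_def topspace_product_topology)

lemma Hausdorff_space_distr_topology: "Hausdorff_space (distr_topology :: ('n::finite) distr topology)"
  unfolding distr_topology_def
  by (intro Hausdorff_space_subtopology) (simp add: Hausdorff_space_product_topology)

lemma separating_functionals_poly_distr:
  "separating_functionals (Collect test_fun) (Collect (poly_distr :: ('n::finite) distr \<Rightarrow> bool))"
proof
  fix f :: "'n testfun" assume f: "f \<in> Collect test_fun" and "\<forall>R\<in>Collect poly_distr. R f = 0"
  then have "monomial_distr \<alpha> f = 0" for \<alpha> using poly_distr_monomial_distr by blast
  then show "f = (\<lambda>x. 0)" using f test_fun_eq_0_if_moments_eq_0 by blast
next
  fix R :: "'n distr" and f g :: "'n testfun" assume "R \<in> Collect poly_distr" "f \<in> Collect test_fun" "g \<in> Collect test_fun"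
  then show "R (\<lambda>x. f x + g x) = R f + R g"
    using distribution_poly_distr[of R] unfolding distribution_def by blast
next
  fix R :: "'n distr" and f :: "'n testfun" and c assume "R \<in> Collect poly_distr" "f \<in> Collect test_fun"
  then show "R (\<lambda>x. c * f x) = c * R f"
    using distribution_poly_distr[of R] unfolding distribution_def by blast
qed (simp_all add: test_fun_zero test_fun_add test_fun_cmult poly_distr_zero poly_distr_add
      poly_distr_cmult)

lemma poly_distr_interpolates:
  assumes T: "T \<in> distributions" and F: "finite F"
  shows "\<exists>Q. poly_distr Q \<and> (\<forall>\<phi>\<in>F. Q \<phi> = T \<phi>)"
proof -
  interpret separating_functionals "Collect test_fun" "Collect (poly_distr :: ('n::finite) distr \<Rightarrow> bool)"
    by (rule separating_functionals_poly_distr)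
  have T': "distribution T" using T by (simp add: distributions_def)
  obtain Q where Q: "poly_distr Q" "\<forall>\<phi>\<in>F \<inter> Collect test_fun. Q \<phi> = T \<phi>"
    using finite_interpolation[of "F \<inter> Collect test_fun" T] F T' unfolding distribution_def by auto
  \<comment> \<open>off the test functions both Q and T vanish by convention\<close>
  moreover have "Q \<phi> = T \<phi>" if "\<not> test_fun \<phi>" for \<phi>
    using that distribution_poly_distr[OF Q(1)] T' unfolding distribution_def by auto
  ultimately show ?thesis by blast
qed

lemma poly_distr_dense:
  assumes W: "openin distr_topology W" "T \<in> W"
  shows "\<exists>Q. poly_distr Q \<and> Q \<in> W"
proof -
  obtain B where B: "openin (product_topology (\<lambda>_. euclidean) UNIV) B" "W = B \<inter> distributions"
    using W(1) unfolding distr_topology_def openin_subtopology by blast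
  then obtain U where U: "finite {\<phi>. U \<phi> \<noteq> UNIV}" "T \<in> Pi\<^sub>E UNIV U" "Pi\<^sub>E UNIV U \<subseteq> B"
    using W(2) unfolding openin_product_topology_alt by auto
  obtain Q where Q: "poly_distr Q" "\<forall>\<phi>\<in>{\<phi>. U \<phi> \<noteq> UNIV}. Q \<phi> = T \<phi>"
    using poly_distr_interpolates[OF _ U(1)] W(2) B(2) by blast
  have "Q \<phi> \<in> U \<phi>" for \<phi>
    using Q(2) U(2) by (cases "U \<phi> = UNIV") (auto simp: PiE_iff)
  then have "Q \<in> Pi\<^sub>E UNIV U" by (simp add: PiE_iff)
  then show ?thesis
    using Q(1) U(3) B(2) distribution_poly_distr by (auto simp: distributions_def)
qed

lemma continuous_maps_eq_if_eq_on_poly_distr: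
  assumes f: "continuous_map distr_topology distr_topology f"
    and g: "continuous_map distr_topology distr_topology g"
    and eq: "\<And>Q. poly_distr Q \<Longrightarrow> f Q = g Q"
    and T: "T \<in> distributions"
  shows "f T = g T"
proof (rule ccontr)
  assume "f T \<noteq> g T"
  moreover have "f T \<in> topspace distr_topology" "g T \<in> topspace distr_topology"
    using f g T by (auto simp: topspace_distr_topology continuous_map_def)
  ultimately obtain U V where UV: "openin distr_topology U" "openin distr_topology V"
    "f T \<in> U" "g T \<in> V" "disjnt U V"
    using Hausdorff_space_distr_topology unfolding Hausdorff_space_def by blast
  let ?W = "{S \<in> topspace distr_topology. f S \<in> U} \<inter> {S \<in> topspace distr_topology. g S \<in> V}"
  have "openin distr_topology ?W"
    using openin_continuous_map_preimage[OF f UV(1)] openin_continuous_map_preimage[OF g UV(2)]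
    by (rule openin_Int)
  moreover have "T \<in> ?W" using T UV by (simp add: topspace_distr_topology)
  ultimately obtain Q where "poly_distr Q" "Q \<in> ?W" using poly_distr_dense by blast
  then show False using eq UV(5) by (auto simp: disjnt_def)
qed

lemma continuous_map_dilation:
  assumes a: "\<forall>i. a$i \<noteq> 0"
  shows "continuous_map distr_topology distr_topology (dilation a :: ('n::finite) distr \<Rightarrow> 'n distr)"
proof -
  have "continuous_map distr_topology euclidean (\<lambda>T. dilation a T \<phi>)" for \<phi> :: "'n testfun"
    unfolding distr_topology_def dilation_eq
    by (rule continuous_map_from_subtopology[OF continuous_map_product_projection]) simp
  then have "continuous_map distr_topology (product_topology (\<lambda>_. euclidean) UNIV) (dilation a)"
    by (simp add: continuous_map_componentwise_UNIV)
  moreover have "dilation a ` topspace distr_topology \<subseteq> distributions"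
    using distribution_dilation[OF _ a] by (auto simp: topspace_distr_topology distributions_def)
  ultimately have "continuous_map distr_topology
      (subtopology (product_topology (\<lambda>_. euclidean) UNIV) distributions) (dilation a)"
    by (auto simp: continuous_map_in_subtopology)
  then show ?thesis by (simp add: distr_topology_def)
qed

theorem lemma1:
  fixes L :: "('n::finite) distr \<Rightarrow> 'n distr" and a :: "real^'n"
  assumes "L \<in> M_class"
    and "\<forall>i. a$i \<noteq> 0"
  shows "\<forall>T\<in>distributions. L (dilation a T) = dilation a (L T)"
proof
  fix T :: "'n distr" assume T: "T \<in> distributions"
  have L: "continuous_map distr_topology distr_topology L"
    using assms(1) by (simp add: M_class_def cont_lin_op_def)
  note D = continuous_map_dilation[OF assms(2)]
  have "(L \<circ> dilation a) T = (dilation a \<circ> L) T"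
    by (rule continuous_maps_eq_if_eq_on_poly_distr[OF continuous_map_compose[OF D L]
          continuous_map_compose[OF L D] _ T]) (simp add: dilation_commute_poly_distr[OF assms])
  then show "L (dilation a T) = dilation a (L T)" by simp
qed

end
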